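(* Let $1<p<\infty$, let $K\ge2$, and let $(X,d,\mu)$ be a $K$-regular tree as described in the context, with sets $E_n,F_n$ as defined there. Then the sequence $\{\mathrm{Cap}_p(E_n,F_n)\}_{n=1}^\infty$ is non-increasing and there exists a constant $0<M_1<\infty$ such that $\mathrm{Cap}_p(E_n,F_n)\le M_1$ for all $n\in\mathbb{N}$.
   Context: A $K$-regular tree is a rooted tree (root $0$) in which every vertex has exactly $K$ children; $X$ is the union of its vertices and edges, each edge an isometric copy of $[0,1]$. $|x|$ is the graph distance from $0$ to $x$, $[y,z]$ the unique geodesic between $y,z$. Let $\lambda,\mu:[0,\infty)\to(0,\infty)$ be locally integrable with $\lambda^p\mu^{-1}\in L^{1/(p-1)}_{\mathrm{loc}}([0,\infty))$; $d\mu(x)=\mu(|x|)\,d|x|$, $d(y,z)=\int_{[y,z]}\lambda(|x|)\,d|x|$ ($d|x|$ gives each edge Lebesgue measure $1$), $ds=\lambda(|x|)\,d|x|$. $X^n=\{x:|x|\le n\}$. An upper gradient of $u$ is a Borel $g\ge0$ with $|u(y)-u(z)|\le\int_{[y,z]}g\,ds$ for all $y,z$; $g_u$ is the minimal upper gradient; $N^{1,p}_{\mathrm{loc}}(X)$ is the space of $u\in L^p_{\mathrm{loc}}(X)$ with an upper gradient in $L^p_{\mathrm{loc}}(X)$. Let $x_0$ be a vertex adjacent to the root $0$ (a child of $0$), $T_{x_0}=\{y\in X:x_0\in[0,y]\}$, $T_1=[0,x_0]\cup T_{x_0}$, and for $n\in\mathbb{N}$, $E_n=(X\setminus X^n)\cap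 T_1$, $F_n=(X\setminus X^n)\setminus T_1$. Define $\mathrm{Cap}_p(E_n,F_n)=\inf\{\int_Xg_u^p\,d\mu:u\in N^{1,p}_{\mathrm{loc}}(X),\ u\equiv1\text{ on }E_n,\ u\equiv0\text{ on }F_n,\ 0\le u\le1\}$. *)

theory Defs
  imports "HOL-Analysis.Analysis" "HOL-Library.Sublist"
begin

text \<open>Vertices are finite words over {0..K-1}; the root is the empty word.
  A non-root point is a pair (v,t) with v a non-root vertex and 0 < t \<le> 1:
  it is the point of the edge from the parent of v (= butlast v) to v at
  graph distance t from the parent.\<close>

definition verts :: "nat \<Rightarrow> nat list set" where
  "verts K = {v. \<forall>a\<in>set v. a < K}"

definition pts :: "nat \<Rightarrow> (nat list \<times> real) set" where
  "pts K = {([], 0)} \<union> {(v, t). v \<in> verts K \<and> v \<noteq> [] \<and> 0 < t \<and> t \<le> 1}"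

definition dist0 :: "nat list \<times> real \<Rightarrow> real" where
  "dist0 x = (if fst x = [] then 0 else real (length (fst x)) - 1 + snd x)"

definition seg0 :: "nat list \<times> real \<Rightarrow> (nat list \<times> real) set" where
  "seg0 y = {([], 0)}
     \<union> {(w, s). w \<noteq> [] \<and> strict_prefix w (fst y) \<and> 0 < s \<and> s \<le> 1}
     \<union> {(w, s). w \<noteq> [] \<and> w = fst y \<and> 0 < s \<and> s \<le> snd y}"

text \<open>The branching point of [0,y] and [0,z] (the point of [0,y] \<inter> [0,z] farthest from 0).\<close>
definition meet :: "nat list \<times> real \<Rightarrow> nat list \<times> real \<Rightarrow> nat list \<times> real" where
  "meet y z = (if y \<in> seg0 z then y else if z \<in> seg0 y then z
     else (let c = longest_common_prefix (fst y) (fst z) in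
           if c = [] then ([], 0) else (c, 1)))"

definition geo :: "nat list \<times> real \<Rightarrow> nat list \<times> real \<Rightarrow> (nat list \<times> real) set" where
  "geo y z = (seg0 y - seg0 z) \<union> (seg0 z - seg0 y) \<union> {meet y z}"

text \<open>With w = mu this is the integral w.r.t. d mu,
  with w = lambda (and f multiplied by an indicator of a geodesic) the line integral w.r.t. ds.\<close>
definition eint :: "(real \<Rightarrow> real) \<Rightarrow> nat \<Rightarrow> (nat list \<times> real \<Rightarrow> ennreal) \<Rightarrow> ennreal" where
  "eint w K f = (\<integral>\<^sup>+ v. (\<integral>\<^sup>+ t. f (v, t) * ennreal (w (dist0 (v, t))) * indicator {0<..1} t \<partial>lborel)
                   \<partial>count_space (verts K - {[]}))"

definition epow :: "ennreal \<Rightarrow> real \<Rightarrow> ennreal" where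
  "epow x p = (if x = \<infinity> then \<infinity> else ennreal (enn2real x powr p))"

definition borel_on_tree :: "(nat list \<times> real \<Rightarrow> 'b::topological_space) \<Rightarrow> bool" where
  "borel_on_tree f = (\<forall>v. (\<lambda>t. f (v, t)) \<in> borel_measurable borel)"

definition upper_gradient ::
  "nat \<Rightarrow> (real \<Rightarrow> real) \<Rightarrow> (nat list \<times> real \<Rightarrow> real) \<Rightarrow> (nat list \<times> real \<Rightarrow> ennreal) \<Rightarrow> bool" where
  "upper_gradient K lam u g =
     (borel_on_tree g \<and>
      (\<forall>y\<in>pts K. \<forall>z\<in>pts K. ennreal \<bar>u y - u z\<bar> \<le> eint lam K (\<lambda>x. g x * indicator (geo y z) x)))"

definition Xn :: "nat \<Rightarrow> nat \<Rightarrow> (nat list \<times> real) set" where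
  "Xn K n = {x \<in> pts K. dist0 x \<le> real n}"

text \<open>L^p_loc (every compact set of X lies in some X^n).\<close>
definition Lploc :: "nat \<Rightarrow> (real \<Rightarrow> real) \<Rightarrow> real \<Rightarrow> (nat list \<times> real \<Rightarrow> ennreal) \<Rightarrow> bool" where
  "Lploc K mu p f = (\<forall>n. eint mu K (\<lambda>x. epow (f x) p * indicator (Xn K n) x) < \<infinity>)"

definition N1ploc :: "nat \<Rightarrow> (real \<Rightarrow> real) \<Rightarrow> (real \<Rightarrow> real) \<Rightarrow> real \<Rightarrow> (nat list \<times> real \<Rightarrow> real) \<Rightarrow> bool" where
  "N1ploc K lam mu p u =
     (borel_on_tree u \<and> Lploc K mu p (\<lambda>x. ennreal \<bar>u x\<bar>) \<and>
      (\<exists>g. upper_gradient K lam u g \<and> Lploc K mu p g))"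

text \<open>Capacity: the integral of g_u^p equals the infimum of the integrals of g^p over
  upper gradients g of u, so the infimum is taken jointly over u and its upper gradients.\<close>
definition Cap :: "nat \<Rightarrow> (real \<Rightarrow> real) \<Rightarrow> (real \<Rightarrow> real) \<Rightarrow> real
                   \<Rightarrow> (nat list \<times> real) set \<Rightarrow> (nat list \<times> real) set \<Rightarrow> ennreal" where
  "Cap K lam mu p E F =
     (INF ug \<in> {(u, g). N1ploc K lam mu p u \<and> upper_gradient K lam u g \<and>
                      (\<forall>x\<in>E. u x = 1) \<and> (\<forall>x\<in>F. u x = 0) \<and>
                      (\<forall>x\<in>pts K. 0 \<le> u x \<and> u x \<le> 1)}.
        eint mu K (\<lambda>x. epow (snd ug x) p))"

text \<open>T_1 = [0,x0] \<union> T_{x0} for the child x0 = [i] of the root.\<close>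
definition T1 :: "nat \<Rightarrow> nat \<Rightarrow> (nat list \<times> real) set" where
  "T1 K i = {x \<in> pts K. fst x = [] \<or> hd (fst x) = i}"

definition En :: "nat \<Rightarrow> nat \<Rightarrow> nat \<Rightarrow> (nat list \<times> real) set" where
  "En K i n = (pts K - Xn K n) \<inter> T1 K i"

definition Fn :: "nat \<Rightarrow> nat \<Rightarrow> nat \<Rightarrow> (nat list \<times> real) set" where
  "Fn K i n = (pts K - Xn K n) - T1 K i"

end

theory Submission
  imports Defs
begin

(*
  Enlarging E or F only adds constraints, so Cap is monotone in the pair (E,F); as E_(n+1) and F_(n+1)
  are contained in E_n and F_n, the capacities decrease. For the bound, one test function serves
  every n >= 1: the potential that rises from 0 to 1 along the edge [0,x0] proportionally to
  lambda-length, equals 1 on T_x0 and 0 off T_1. Its upper gradient is the constant 1/Lambda on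
  that edge (Lambda the lambda-length of the edge) and vanishes elsewhere; being bounded and
  supported in X^1, it has finite p-energy.
*)

lemma set_integrable_nn_integral_finite:
  assumes "set_integrable M A f" "B \<subseteq> A"
  shows "(\<integral>\<^sup>+t. ennreal (f t) * indicator B t \<partial>M) < \<infinity>"
proof -
  have "(\<integral>\<^sup>+t. ennreal (f t) * indicator B t \<partial>M) \<le> (\<integral>\<^sup>+t. ennreal (norm (indicator A t *\<^sub>R f t)) \<partial>M)"
    using assms(2) by (intro nn_integral_mono) (auto simp: indicator_def)
  also have "\<dots> < \<infinity>"
    using assms(1) by (simp add: set_integrable_def integrable_iff_bounded)
  finally show ?thesis .
qed

lemma set_integrable_nn_integrand_measurable:
  fixes f :: "'a \<Rightarrow> real"
  assumes "set_integrable M A f" "B \<subseteq> A" "B \<in> sets M"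
  shows "(\<lambda>t. ennreal (f t) * indicator B t) \<in> borel_measurable M"
proof -
  have "(\<lambda>t. indicator A t *\<^sub>R f t) \<in> borel_measurable M"
    using assms(1) by (simp add: set_integrable_def)
  moreover have "(\<lambda>t. ennreal (f t) * indicator B t) = (\<lambda>t. ennreal (indicator A t *\<^sub>R f t) * indicator B t)"
    using assms(2) by (auto simp: indicator_def fun_eq_iff)
  ultimately show ?thesis using assms(3) by simp
qed

definition arclen :: "(real \<Rightarrow> real) \<Rightarrow> real \<Rightarrow> real" where
  "arclen lam x = enn2real (\<integral>\<^sup>+t. ennreal (lam t) * indicator {0<..x} t \<partial>lborel)"

lemma arclen_nonpos: "x \<le> 0 \<Longrightarrow> arclen lam x = 0"
  unfolding arclen_def by simp

lemma arclen_nonneg: "0 \<le> arclen lam x"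
  unfolding arclen_def by simp

lemma arclen_diff:
  assumes lam: "set_integrable lborel {0..1} lam" and "0 \<le> a" "a \<le> b" "b \<le> 1"
  shows "ennreal (arclen lam b - arclen lam a) = (\<integral>\<^sup>+t. ennreal (lam t) * indicator {a<..b} t \<partial>lborel)"
proof -
  let ?I = "\<lambda>S. \<integral>\<^sup>+t. ennreal (lam t) * indicator S t \<partial>lborel"
  have "?I {0<..b} = (\<integral>\<^sup>+t. ennreal (lam t) * indicator {0<..a} t + ennreal (lam t) * indicator {a<..b} t \<partial>lborel)"
    using assms by (intro nn_integral_cong) (auto simp: indicator_def)
  also have "\<dots> = ?I {0<..a} + ?I {a<..b}"
    using assms by (intro nn_integral_add set_integrable_nn_integrand_measurable[OF lam]) auto
  finally have "?I {0<..b} = ?I {0<..a} + ?I {a<..b}" .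
  moreover have "?I {0<..a} < \<infinity>" "?I {a<..b} < \<infinity>"
    using assms by (intro set_integrable_nn_integral_finite[OF lam]; auto)+
  ultimately show ?thesis
    unfolding arclen_def using assms
    by (simp add: enn2real_plus ennreal_enn2real_if less_top)
qed

lemma arclen_mono:
  assumes lam: "set_integrable lborel {0..1} lam" and "a \<le> b" "b \<le> 1"
  shows "arclen lam a \<le> arclen lam b"
  unfolding arclen_def
proof (rule enn2real_mono)
  show "(\<integral>\<^sup>+t. ennreal (lam t) * indicator {0<..a} t \<partial>lborel) \<le> (\<integral>\<^sup>+t. ennreal (lam t) * indicator {0<..b} t \<partial>lborel)"
    using assms by (intro nn_integral_mono) (auto simp: indicator_def)
  have "{0<..b} \<subseteq> {0..1}"
    using assms by auto
  then show "(\<integral>\<^sup>+t. ennreal (lam t) * indicator {0<..b} t \<partial>lborel) < top"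
    using set_integrable_nn_integral_finite[OF lam] by simp
qed

lemma arclen_pos:
  assumes lam: "set_integrable lborel {0..1} lam" and pos: "\<forall>r\<ge>0. 0 < lam r"
  shows "0 < arclen lam 1"
proof -
  let ?f = "\<lambda>t. ennreal (lam t) * indicator {0<..1} t"
  have sub: "{0<..1::real} \<subseteq> {0..1}"
    by auto
  have "{t \<in> space lborel. ?f t \<noteq> 0} = {0<..1}"
    using pos by (auto simp: indicator_def ennreal_eq_0_iff not_le less_imp_le)
  moreover have "?f \<in> borel_measurable lborel"
    using set_integrable_nn_integrand_measurable[OF lam sub] by simp
  ultimately have "(\<integral>\<^sup>+t. ?f t \<partial>lborel) \<noteq> 0"
    by (subst nn_integral_0_iff) auto
  then show ?thesis
    using set_integrable_nn_integral_finite[OF lam sub]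
    unfolding arclen_def by (simp add: enn2real_positive_iff less_top[symmetric] zero_less_iff_neq_zero)
qed

text \<open>The value |x| at the point where [0,y] leaves the edge [0,x0], for x0 = [i].\<close>

definition edge_proj :: "nat \<Rightarrow> nat list \<times> real \<Rightarrow> real" where
  "edge_proj i y = (if fst y = [i] then snd y else if strict_prefix [i] (fst y) then 1 else 0)"

lemma edge_proj_range: "y \<in> pts K \<Longrightarrow> 0 \<le> edge_proj i y \<and> edge_proj i y \<le> 1"
  unfolding edge_proj_def pts_def by auto

lemma edge_point_in_seg0_iff: "0 < t \<Longrightarrow> t \<le> 1 \<Longrightarrow> ([i], t) \<in> seg0 y \<longleftrightarrow> t \<le> edge_proj i y"
  unfolding edge_proj_def seg0_def by auto

lemma edge_point_in_geo:
  assumes "y \<in> pts K" "z \<in> pts K"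
    and "min (edge_proj i y) (edge_proj i z) < t" "t \<le> max (edge_proj i y) (edge_proj i z)"
  shows "([i], t) \<in> geo y z"
proof -
  have "0 < t" "t \<le> 1"
    using assms edge_proj_range[of y K i] edge_proj_range[of z K i] by auto
  then show ?thesis
    using assms(3,4) edge_point_in_seg0_iff[of t i y] edge_point_in_seg0_iff[of t i z]
    unfolding geo_def by auto
qed

lemma edge_proj_En:
  assumes "1 \<le> n" "x \<in> En K i n"
  shows "edge_proj i x = 1"
proof -
  have x: "x \<in> pts K" "real n < dist0 x" "fst x = [] \<or> hd (fst x) = i"
    using assms(2) unfolding En_def Xn_def T1_def by auto
  have "fst x \<noteq> []"
    using x unfolding pts_def dist0_def by auto
  have "fst x \<noteq> [i]"
  proof
    assume "fst x = [i]"
    then have "dist0 x \<le> 1"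
      using x(1) unfolding pts_def dist0_def by auto
    then show False
      using x(2) assms(1) by linarith
  qed
  then have "strict_prefix [i] (fst x)"
    using x(3) \<open>fst x \<noteq> []\<close> by (cases "fst x") (auto simp: strict_prefix_def)
  then show ?thesis
    using \<open>fst x \<noteq> [i]\<close> unfolding edge_proj_def by simp
qed

lemma edge_proj_Fn: "x \<in> Fn K i n \<Longrightarrow> edge_proj i x = 0"
  unfolding Fn_def T1_def edge_proj_def by (cases "fst x") auto

text \<open>The min only matters off \<^term>\<open>pts K\<close>, where \<^term>\<open>snd y\<close> may exceed 1 and
  \<^const>\<open>arclen\<close> would integrate \<open>lam\<close> beyond its integrability range.\<close>

definition edge_potential :: "(real \<Rightarrow> real) \<Rightarrow> nat \<Rightarrow> nat list \<times> real \<Rightarrow> real" where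
  "edge_potential lam i y = arclen lam (min (edge_proj i y) 1) / arclen lam 1"

definition edge_gradient :: "(real \<Rightarrow> real) \<Rightarrow> nat \<Rightarrow> nat list \<times> real \<Rightarrow> ennreal" where
  "edge_gradient lam i x =
     (if fst x = [i] \<and> 0 < snd x \<and> snd x \<le> 1 then ennreal (1 / arclen lam 1) else 0)"

lemma edge_potential_range:
  assumes lam: "set_integrable lborel {0..1} lam" and pos: "\<forall>r\<ge>0. 0 < lam r"
  shows "0 \<le> edge_potential lam i x \<and> edge_potential lam i x \<le> 1"
  using arclen_mono[OF lam, of "min (edge_proj i x) 1" 1] arclen_pos[OF lam pos]
  unfolding edge_potential_def by (simp add: arclen_nonneg)

lemma edge_potential_borel:
  assumes lam: "set_integrable lborel {0..1} lam"
  shows "borel_on_tree (edge_potential lam i)"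
  unfolding borel_on_tree_def
proof
  fix v :: "nat list"
  have "mono (\<lambda>t. arclen lam (min t 1))"
    by (rule monoI) (auto intro: arclen_mono[OF lam])
  then have "(\<lambda>t. arclen lam (min t 1)) \<in> borel_measurable borel"
    by (rule borel_measurable_mono)
  then show "(\<lambda>t. edge_potential lam i (v, t)) \<in> borel_measurable borel"
    unfolding edge_potential_def edge_proj_def by (cases "v = [i]") auto
qed

lemma edge_gradient_borel: "borel_on_tree (edge_gradient lam i)"
  unfolding borel_on_tree_def edge_gradient_def by simp

lemma edge_potential_diff:
  fixes i :: nat
  assumes lam: "set_integrable lborel {0..1} lam" and pos: "\<forall>r\<ge>0. 0 < lam r"
    and y: "y \<in> pts K" and z: "z \<in> pts K"
  defines "lo \<equiv> min (edge_proj i y) (edge_proj i z)" and "hi \<equiv> max (edge_proj i y) (edge_proj i z)"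
  shows "ennreal \<bar>edge_potential lam i y - edge_potential lam i z\<bar>
      = (\<integral>\<^sup>+t. ennreal (1 / arclen lam 1) * (ennreal (lam t) * indicator {lo<..hi} t) \<partial>lborel)"
proof -
  define c where "c = 1 / arclen lam 1"
  have range: "0 \<le> lo" "lo \<le> hi" "hi \<le> 1"
    using edge_proj_range[OF y, of i] edge_proj_range[OF z, of i] unfolding lo_def hi_def by auto
  have "c > 0"
    using arclen_pos[OF lam pos] unfolding c_def by simp
  have "\<bar>arclen lam (edge_proj i y) - arclen lam (edge_proj i z)\<bar> = arclen lam hi - arclen lam lo"
    using arclen_mono[OF lam] edge_proj_range[OF y, of i] edge_proj_range[OF z, of i]
    unfolding lo_def hi_def by (cases "edge_proj i y \<le> edge_proj i z") auto
  then have "\<bar>edge_potential lam i y - edge_potential lam i z\<bar> = c * (arclen lam hi - arclen lam lo)"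
    using edge_proj_range[OF y, of i] edge_proj_range[OF z, of i] arclen_pos[OF lam pos]
    unfolding edge_potential_def c_def by (simp add: diff_divide_distrib[symmetric] abs_divide)
  then have "ennreal \<bar>edge_potential lam i y - edge_potential lam i z\<bar>
      = ennreal c * (\<integral>\<^sup>+t. ennreal (lam t) * indicator {lo<..hi} t \<partial>lborel)"
    using \<open>c > 0\<close> arclen_diff[OF lam range] arclen_mono[OF lam range(2,3)] by (simp add: ennreal_mult)
  also have "\<dots> = (\<integral>\<^sup>+t. ennreal c * (ennreal (lam t) * indicator {lo<..hi} t) \<partial>lborel)"
    using range
    by (intro nn_integral_cmult[symmetric] set_integrable_nn_integrand_measurable[OF lam]) auto
  finally show ?thesis
    unfolding c_def .
qed

lemma edge_potential_upper_gradient: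
  assumes lam: "set_integrable lborel {0..1} lam" and pos: "\<forall>r\<ge>0. 0 < lam r" and "i < K"
  shows "upper_gradient K lam (edge_potential lam i) (edge_gradient lam i)"
  unfolding upper_gradient_def
proof (intro conjI ballI edge_gradient_borel)
  fix y z assume y: "y \<in> pts K" and z: "z \<in> pts K"
  define lo where "lo = min (edge_proj i y) (edge_proj i z)"
  define hi where "hi = max (edge_proj i y) (edge_proj i z)"
  have "ennreal \<bar>edge_potential lam i y - edge_potential lam i z\<bar>
      = (\<integral>\<^sup>+t. ennreal (1 / arclen lam 1) * (ennreal (lam t) * indicator {lo<..hi} t) \<partial>lborel)"
    unfolding lo_def hi_def by (rule edge_potential_diff[OF lam pos y z])
  also have "\<dots> \<le> (\<integral>\<^sup>+t. edge_gradient lam i ([i], t) * indicator (geo y z) ([i], t)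
                        * ennreal (lam (dist0 ([i], t))) * indicator {0<..1} t \<partial>lborel)"
  proof (intro nn_integral_mono)
    fix t
    show "ennreal (1 / arclen lam 1) * (ennreal (lam t) * indicator {lo<..hi} t)
      \<le> edge_gradient lam i ([i], t) * indicator (geo y z) ([i], t)
         * ennreal (lam (dist0 ([i], t))) * indicator {0<..1} t"
    proof (cases "lo < t \<and> t \<le> hi")
      case True
      then have "([i], t) \<in> geo y z"
        using edge_point_in_geo[OF y z] unfolding lo_def hi_def by blast
      moreover have "0 < t" "t \<le> 1"
        using True edge_proj_range[OF y, of i] edge_proj_range[OF z, of i] unfolding lo_def hi_def by auto
      ultimately show ?thesis
        using True unfolding edge_gradient_def by (simp add: dist0_def mult.assoc)
    qed simp
  qed
  also have "\<dots> \<le> eint lam K (\<lambda>x. edge_gradient lam i x * indicator (geo y z) x)"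
    unfolding eint_def using \<open>i < K\<close>
    by (intro nn_integral_ge_point[where p = "\<lambda>v. \<integral>\<^sup>+t. edge_gradient lam i (v, t)
         * indicator (geo y z) (v, t) * ennreal (lam (dist0 (v, t))) * indicator {0<..1} t \<partial>lborel"])
       (simp add: verts_def)
  finally show "ennreal \<bar>edge_potential lam i y - edge_potential lam i z\<bar>
      \<le> eint lam K (\<lambda>x. edge_gradient lam i x * indicator (geo y z) x)" .
qed

lemma epow_le_powr:
  assumes "0 < p" "0 \<le> B" "x \<le> ennreal B"
  shows "epow x p \<le> ennreal (B powr p)"
proof -
  have "x \<noteq> \<infinity>"
    using assms(3) by (auto simp: top_unique)
  moreover have "enn2real x \<le> B"
    using assms(2,3) by (metis enn2real_ennreal enn2real_mono ennreal_less_top)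
  ultimately show ?thesis
    using assms(1) unfolding epow_def by (simp add: ennreal_leI powr_mono2)
qed

lemma edge_integral_Xn_le:
  fixes f :: "real \<Rightarrow> ennreal"
  assumes mu: "set_integrable lborel {0..real n} mu" and v: "v \<in> verts K - {[]}" and f: "\<And>t. f t \<le> C"
  shows "(\<integral>\<^sup>+t. f t * indicator (Xn K n) (v, t) * ennreal (mu (dist0 (v, t))) * indicator {0<..1} t \<partial>lborel)
         \<le> C * (\<integral>\<^sup>+s. ennreal (mu s) * indicator {0..real n} s \<partial>lborel) * indicator {w. length w \<le> n} v"
proof -
  define h where "h s = ennreal (mu s) * indicator {0..real n} s" for s
  have [measurable]: "h \<in> borel_measurable borel"
    using set_integrable_nn_integrand_measurable[OF mu order_refl] unfolding h_def by simp
  define m where "m = real (length v) - 1"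
  have "0 \<le> m"
    using v unfolding m_def by (cases v) auto
  have "(\<integral>\<^sup>+t. f t * indicator (Xn K n) (v, t) * ennreal (mu (dist0 (v, t))) * indicator {0<..1} t \<partial>lborel)
      \<le> (\<integral>\<^sup>+t. (C * indicator {w. length w \<le> n} v) * h (m + 1 * t) \<partial>lborel)"
  proof (intro nn_integral_mono)
    fix t
    show "f t * indicator (Xn K n) (v, t) * ennreal (mu (dist0 (v, t))) * indicator {0<..1} t
        \<le> (C * indicator {w. length w \<le> n} v) * h (m + 1 * t)"
    proof (cases "(v, t) \<in> Xn K n \<and> 0 < t \<and> t \<le> 1")
      case True
      have "dist0 (v, t) = m + t"
        using v unfolding dist0_def m_def by auto
      moreover from this have "m + t \<le> real n"
        using True unfolding Xn_def by auto
      moreover from this have "length v \<le> n"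
        using True unfolding m_def by linarith
      ultimately show ?thesis
        using True \<open>0 \<le> m\<close> f[of t] unfolding h_def by (auto intro: mult_right_mono)
    qed (auto simp: indicator_def)
  qed
  also have "\<dots> = (C * indicator {w. length w \<le> n} v) * (\<integral>\<^sup>+t. h (m + 1 * t) \<partial>lborel)"
    by (rule nn_integral_cmult) measurable
  also have "(\<integral>\<^sup>+t. h (m + 1 * t) \<partial>lborel) = (\<integral>\<^sup>+s. h s \<partial>lborel)"
    using nn_integral_real_affine[of h 1 m] by simp
  finally show ?thesis
    unfolding h_def by (simp add: mult_ac)
qed

lemma Lploc_bounded:
  assumes mu: "\<forall>n::nat. set_integrable lborel {0..real n} mu" and "0 < p" "0 \<le> B"
    and f: "\<And>x. f x \<le> ennreal B"
  shows "Lploc K mu p f"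
  unfolding Lploc_def
proof
  fix n :: nat
  define A where "A = verts K - {[]}"
  define S where "S = {v \<in> A. length v \<le> n}"
  define C where "C = ennreal (B powr p) * (\<integral>\<^sup>+s. ennreal (mu s) * indicator {0..real n} s \<partial>lborel)"
  have "finite S"
    by (rule finite_subset[OF _ finite_lists_length_le[of "{..<K}" n]])
       (auto simp: S_def A_def verts_def)
  have "C < \<infinity>"
    using set_integrable_nn_integral_finite[OF mu[rule_format, of n] order_refl]
    unfolding C_def by (simp add: ennreal_mult_less_top)
  have "eint mu K (\<lambda>x. epow (f x) p * indicator (Xn K n) x) \<le> (\<integral>\<^sup>+v. C * indicator S v \<partial>count_space A)"
    unfolding eint_def A_def[symmetric]
  proof (intro nn_integral_mono)
    fix v assume "v \<in> space (count_space A)"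
    then show "(\<integral>\<^sup>+t. epow (f (v, t)) p * indicator (Xn K n) (v, t) * ennreal (mu (dist0 (v, t)))
                 * indicator {0<..1} t \<partial>lborel) \<le> C * indicator S v"
      using edge_integral_Xn_le[OF mu[rule_format] _ epow_le_powr[OF \<open>0 < p\<close> \<open>0 \<le> B\<close> f]]
      unfolding C_def S_def A_def by (simp add: indicator_def)
  qed
  also have "\<dots> = C * emeasure (count_space A) S"
    by (rule nn_integral_cmult_indicator) (auto simp: S_def)
  also have "\<dots> = C * of_nat (card S)"
    using \<open>finite S\<close> by (subst emeasure_count_space_finite) (auto simp: S_def)
  also have "\<dots> < \<infinity>"
    using \<open>C < \<infinity>\<close> by (simp add: ennreal_mult_less_top of_nat_less_top)
  finally show "eint mu K (\<lambda>x. epow (f x) p * indicator (Xn K n) x) < \<infinity>" .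
qed

lemma edge_gradient_le: "edge_gradient lam i x \<le> ennreal (1 / arclen lam 1)"
  unfolding edge_gradient_def by simp

lemma edge_gradient_Lploc:
  assumes "\<forall>n::nat. set_integrable lborel {0..real n} mu" and "0 < p"
  shows "Lploc K mu p (edge_gradient lam i)"
  using Lploc_bounded[OF assms _ edge_gradient_le] by (simp add: arclen_nonneg)

lemma edge_energy_finite:
  assumes mu: "\<forall>n::nat. set_integrable lborel {0..real n} mu" and "0 < p" and "i < K"
  shows "eint mu K (\<lambda>x. epow (edge_gradient lam i x) p) < \<infinity>"
proof -
  have "(\<lambda>x. epow (edge_gradient lam i x) p) = (\<lambda>x. epow (edge_gradient lam i x) p * indicator (Xn K 1) x)"
  proof (rule ext)
    fix x
    show "epow (edge_gradient lam i x) p = epow (edge_gradient lam i x) p * indicator (Xn K 1) x"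
    proof (cases "fst x = [i] \<and> 0 < snd x \<and> snd x \<le> 1")
      case True
      then have "x \<in> Xn K 1"
        using \<open>i < K\<close> unfolding Xn_def pts_def dist0_def verts_def by (cases x) auto
      then show ?thesis by simp
    next
      case False
      then have "edge_gradient lam i x = 0"
        unfolding edge_gradient_def by auto
      then show ?thesis
        using \<open>0 < p\<close> unfolding epow_def by simp
    qed
  qed
  then show ?thesis
    using edge_gradient_Lploc[OF mu \<open>0 < p\<close>, of K lam i] unfolding Lploc_def by metis
qed

lemma edge_potential_N1ploc:
  assumes lam: "set_integrable lborel {0..1} lam" and pos: "\<forall>r\<ge>0. 0 < lam r"
    and mu: "\<forall>n::nat. set_integrable lborel {0..real n} mu" and "0 < p" and "i < K"
  shows "N1ploc K lam mu p (edge_potential lam i)"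
  unfolding N1ploc_def
proof (intro conjI exI)
  show "Lploc K mu p (\<lambda>x. ennreal \<bar>edge_potential lam i x\<bar>)"
    using edge_potential_range[OF lam pos] by (intro Lploc_bounded[OF mu \<open>0 < p\<close>, of 1]) auto
  show "Lploc K mu p (edge_gradient lam i)"
    by (rule edge_gradient_Lploc[OF mu \<open>0 < p\<close>])
qed (use edge_potential_borel[OF lam] edge_potential_upper_gradient[OF lam pos \<open>i < K\<close>] in auto)

lemma Cap_En_Fn_le_edge_energy:
  assumes lam: "set_integrable lborel {0..1} lam" and pos: "\<forall>r\<ge>0. 0 < lam r"
    and mu: "\<forall>n::nat. set_integrable lborel {0..real n} mu" and "0 < p" and "i < K" and "1 \<le> n"
  shows "Cap K lam mu p (En K i n) (Fn K i n) \<le> eint mu K (\<lambda>x. epow (edge_gradient lam i x) p)"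
  unfolding Cap_def
proof (rule INF_lower2[of "(edge_potential lam i, edge_gradient lam i)"], safe)
  fix x
  show "x \<in> En K i n \<Longrightarrow> edge_potential lam i x = 1"
    using edge_proj_En[OF \<open>1 \<le> n\<close>] arclen_pos[OF lam pos] unfolding edge_potential_def by simp
  show "x \<in> Fn K i n \<Longrightarrow> edge_potential lam i x = 0"
    using edge_proj_Fn unfolding edge_potential_def by (simp add: arclen_nonpos)
qed (use edge_potential_N1ploc[OF assms(1-5)] edge_potential_upper_gradient[OF lam pos \<open>i < K\<close>]
       edge_potential_range[OF lam pos] in auto)

lemma Cap_mono: "E' \<subseteq> E \<Longrightarrow> F' \<subseteq> F \<Longrightarrow> Cap K lam mu p E' F' \<le> Cap K lam mu p E F"
  unfolding Cap_def by (rule INF_superset_mono) auto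

lemma En_antimono: "m \<le> n \<Longrightarrow> En K i n \<subseteq> En K i m"
  unfolding En_def Xn_def by auto

lemma Fn_antimono: "m \<le> n \<Longrightarrow> Fn K i n \<subseteq> Fn K i m"
  unfolding Fn_def Xn_def by auto

theorem lemma3p5:
  fixes p :: real and K i :: nat and lam mu :: "real \<Rightarrow> real"
  assumes "1 < p" and "2 \<le> K" and "i < K"
    and "\<forall>r\<ge>0. 0 < lam r" and "\<forall>r\<ge>0. 0 < mu r"
    and "\<forall>n::nat. set_integrable lborel {0..real n} lam"
    and "\<forall>n::nat. set_integrable lborel {0..real n} mu"
    and "\<forall>n::nat. set_integrable lborel {0..real n} (\<lambda>r. (lam r powr p / mu r) powr (1 / (p - 1)))"
  shows "(\<forall>n::nat. 1 \<le> n \<longrightarrow>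
            Cap K lam mu p (En K i (Suc n)) (Fn K i (Suc n)) \<le> Cap K lam mu p (En K i n) (Fn K i n))
       \<and> (\<exists>M1::real. 0 < M1 \<and> (\<forall>n::nat. 1 \<le> n \<longrightarrow> Cap K lam mu p (En K i n) (Fn K i n) \<le> ennreal M1))"
proof (intro conjI allI impI)
  fix n :: nat
  show "Cap K lam mu p (En K i (Suc n)) (Fn K i (Suc n)) \<le> Cap K lam mu p (En K i n) (Fn K i n)"
    by (intro Cap_mono En_antimono Fn_antimono) simp_all
next
  have lam: "set_integrable lborel {0..1} lam"
    using assms(6)[rule_format, of 1] by simp
  define M where "M = eint mu K (\<lambda>x. epow (edge_gradient lam i x) p)"
  have "M < \<infinity>"
    unfolding M_def using edge_energy_finite[OF assms(7)] assms(1,3) by simp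
  show "\<exists>M1::real. 0 < M1 \<and> (\<forall>n::nat. 1 \<le> n \<longrightarrow> Cap K lam mu p (En K i n) (Fn K i n) \<le> ennreal M1)"
  proof (intro exI conjI allI impI)
    show "0 < enn2real M + 1"
      by (simp add: add_nonneg_pos)
    fix n :: nat assume "1 \<le> n"
    then have "Cap K lam mu p (En K i n) (Fn K i n) \<le> M"
      unfolding M_def using Cap_En_Fn_le_edge_energy[OF lam assms(4,7)] assms(1,3) by simp
    also have "\<dots> = ennreal (enn2real M)"
      using \<open>M < \<infinity>\<close> by simp
    also have "\<dots> \<le> ennreal (enn2real M + 1)"
      by (rule ennreal_leI) simp
    finally show "Cap K lam mu p (En K i n) (Fn K i n) \<le> ennreal (enn2real M + 1)" .
  qed
qed

end
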